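(* Let $1<p,q<\infty$, $f\in L^p(\mathbb{R}^n)$, $g\in L^q(\mathbb{R}^n)$ with $\frac1p+\frac1q=\frac1r<1$ (allowing $\frac1r\le1$ if $n=1$). Then for every $i\in\{1,\dots,n\}$, $R>0$ and $\lambda>0$, $$m\big(\{x\in B_R:\ \pi(\mathcal{R}(f,g)(x),\mathcal{R}(f,g)(x+he_i))>\lambda\}\big)\to0\quad\text{as } h\to0.$$
   Context: Here $\mathcal{M}(f,g)(x)=\sup_{R>0}\frac{1}{m(B_R)}\int_{B_R}|f(x+z)g(x-z)|\,dz$, with $B_R$ the ball of radius $R$ centered at $0$ and $m$ Lebesgue measure; $e_i$ is the $i$-th standard basis vector. The set of good radii is $$\mathcal{R}(f,g)(x)=\Big\{r\ge0:\ \mathcal{M}(f,g)(x)=\limsup_{k\to\infty}\frac{1}{m(B_{r_k})}\int_{B_{r_k}}|f(x+y)g(x-y)|\,dy\ \text{for some sequence } r_k>0,\ r_k\to r\Big\}.$$ For $A\subset[0,\infty)$ and $\lambda\ge0$, $A_{(\lambda)}=\{t:\inf_{a\in A}|t-a|\le\lambda\}$, and the Hausdorff distance is $\pi(A,B)=\inf\{\delta>0: A\subset B_{(\delta)},\ B\subset A_{(\delta)}\}$. *)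

theory Defs
  imports "HOL-Analysis.Analysis" "HOL-Library.Liminf_Limsup"
begin

definition bavg :: "(real^'n \<Rightarrow> real) \<Rightarrow> (real^'n \<Rightarrow> real) \<Rightarrow> real^'n \<Rightarrow> real \<Rightarrow> ennreal" where
  "bavg f g x R =
     (set_nn_integral lebesgue (ball 0 R) (\<lambda>z. ennreal \<bar>f (x + z) * g (x - z)\<bar>))
       / emeasure lebesgue (ball (0::real^'n) R)"

definition bmax :: "(real^'n \<Rightarrow> real) \<Rightarrow> (real^'n \<Rightarrow> real) \<Rightarrow> real^'n \<Rightarrow> ennreal" where
  "bmax f g x = (SUP R\<in>{0<..}. bavg f g x R)"

definition good_radii :: "(real^'n \<Rightarrow> real) \<Rightarrow> (real^'n \<Rightarrow> real) \<Rightarrow> real^'n \<Rightarrow> real set" where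
  "good_radii f g x = {r. r \<ge> 0 \<and> (\<exists>rk::nat \<Rightarrow> real. (\<forall>k. rk k > 0) \<and> rk \<longlonglongrightarrow> r \<and>
       bmax f g x = limsup (\<lambda>k. bavg f g x (rk k)))}"

text \<open>lambda-neighbourhood A_(lambda) = {t. inf_{a in A} |t-a| <= lambda}; inf over the empty set is +infinity.\<close>
definition nbhd :: "real set \<Rightarrow> real \<Rightarrow> real set" where
  "nbhd A l = {t. (INF a\<in>A. ereal \<bar>t - a\<bar>) \<le> ereal l}"

text \<open>Hausdorff distance pi(A,B) (extended real; inf of the empty set is +infinity).\<close>
definition hdist :: "real set \<Rightarrow> real set \<Rightarrow> ereal" where
  "hdist A B = (INF d\<in>{d. d > 0 \<and> A \<subseteq> nbhd B d \<and> B \<subseteq> nbhd A d}. ereal d)"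

definition louter :: "'a::euclidean_space set \<Rightarrow> ennreal" where
  "louter A = (INF S\<in>{S\<in>sets lebesgue. A \<subseteq> S}. emeasure lebesgue S)"

definition in_Lp :: "real \<Rightarrow> ('a::euclidean_space \<Rightarrow> real) \<Rightarrow> bool" where
  "in_Lp p f \<longleftrightarrow> f \<in> borel_measurable lebesgue \<and> integrable lebesgue (\<lambda>x. \<bar>f x\<bar> powr p)"

end

theory Submission
  imports Defs
begin

text \<open>
  For a set-valued map F on a euclidean space whose values are sets of
  radii in [0,\<infinity>), the Hausdorff distance between F x and F (x + v) can exceed l only
  if one of finitely many "events" changes between x and x + v: whether x lies in the
  exceptional set Z (where F x = [0,\<infinity>)), whether F x reaches beyond a large level T,
  or whether F x meets one of the cells [j l, (j+1) l] of a grid covering [0,T].  If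
  all these events are Lebesgue measurable, continuity of translation in measure
  makes each change small, which yields convergence in measure of the Hausdorff
  distance (lemma hdist_shift_tendsto_0).

  The bulk of the file verifies the hypotheses for the good radii of the bilinear
  maximal function: after replacing f and g by Borel representatives, the events
  "R(f,g)(x) meets [a,b]" are described by countably many conditions on averages
  over rational radii (hence are measurable), R(f,g)(x) = [0,\<infinity>) where M(f,g)(x) = 0,
  and otherwise R(f,g)(x) is bounded because, by a Young-type inequality, the
  averages over large balls eventually drop below M(f,g)(x).  Here only the
  consequence 1/p + 1/q \<le> 1 of the hypotheses is needed.
\<close>

lemma ennreal_tendsto_zeroI:
  fixes u :: "'b \<Rightarrow> ennreal" and c :: real
  assumes c: "c > 0" and small: "\<And>e. e > 0 \<Longrightarrow> eventually (\<lambda>x. u x < ennreal (c * e)) F"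
  shows "(u \<longlongrightarrow> 0) F"
proof (rule order_tendstoI)
  fix a :: ennreal assume "a > 0"
  have "\<exists>e>0. ennreal (c * e) \<le> a"
  proof (cases "a = top")
    case True then show ?thesis by (intro exI[of _ 1]) auto
  next
    case False then show ?thesis using \<open>a > 0\<close> c
      by (intro exI[of _ "enn2real a / c"]) (auto simp: enn2real_positive_iff less_top)
  qed
  then obtain e where e: "e > 0" "ennreal (c * e) \<le> a" by blast
  show "eventually (\<lambda>x. u x < a) F"
    using small[OF e(1)] by eventually_elim (use e in auto)
qed auto

lemma translate_image_eq: "(\<lambda>x. -v + x) ` S = {x. x + v \<in> S}" for v :: "'a::ab_group_add"
proof safe
  fix x assume "x + v \<in> S" then show "x \<in> (\<lambda>x. -v + x) ` S" by (rule rev_image_eqI) simp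
qed simp

lemma emeasure_translate: "emeasure lebesgue {x. x + v \<in> S} = emeasure lebesgue S"
  for v :: "'a::euclidean_space"
  using emeasure_lebesgue_affine[of 1 "-v" S] translate_image_eq[of v S] by simp

lemma sets_translate: "S \<in> sets lebesgue \<Longrightarrow> {x. x + v \<in> S} \<in> sets lebesgue"
  for v :: "'a::euclidean_space"
  using lebesgue_sets_translation[of S "-v"] translate_image_eq[of v S] by simp

definition shift_defect :: "real \<Rightarrow> 'a::euclidean_space set \<Rightarrow> 'a \<Rightarrow> 'a set" where
  "shift_defect R E v = {x \<in> ball 0 R. (x \<in> E) \<noteq> (x + v \<in> E)}"

lemma sets_shift_defect:
  assumes "E \<in> sets lebesgue"
  shows "shift_defect R E v \<in> sets lebesgue"
proof -
  have "shift_defect R E v = ball 0 R \<inter> ((E - {x. x + v \<in> E}) \<union> ({x. x + v \<in> E} - E))"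
    by (auto simp: shift_defect_def)
  also have "\<dots> \<in> sets lebesgue"
    using sets_translate[OF assms, of v] assms by (intro sets.Int sets.Un sets.Diff) (auto simp: borel_open)
  finally show ?thesis .
qed

lemma lebesgue_compact_open_approx:
  fixes E :: "'a::euclidean_space set"
  assumes E: "E \<in> sets lebesgue" and "bounded E" and e: "e > 0"
  obtains K U where "compact K" "open U" "K \<subseteq> E" "E \<subseteq> U"
    "emeasure lebesgue (U - K) < ennreal (2 * e)"
proof -
  obtain U where U: "open U" "E \<subseteq> U" "emeasure lebesgue (U - E) < ennreal e"
    by (rule sets_lebesgue_outer_open[OF E e])
  obtain K where K: "closed K" "K \<subseteq> E" "emeasure lebesgue (E - K) < ennreal e"
    by (rule sets_lebesgue_inner_closed[OF E e])
  have "compact K" using K \<open>bounded E\<close> by (meson bounded_subset compact_eq_bounded_closed)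
  have [measurable]: "U \<in> sets lebesgue" "K \<in> sets lebesgue" using U K by (auto simp: borel_open borel_closed)
  have "emeasure lebesgue (U - K) \<le> emeasure lebesgue ((U - E) \<union> (E - K))"
    by (rule emeasure_mono) (use E in auto)
  also have "\<dots> \<le> emeasure lebesgue (U - E) + emeasure lebesgue (E - K)"
    by (rule emeasure_subadditive) (use E in auto)
  also have "\<dots> < ennreal (e + e)" by (rule add_mono_ennreal) (use U K in auto)
  finally show ?thesis using that \<open>compact K\<close> U K by simp
qed

lemma shift_change_in_gap:
  assumes KE: "K \<subseteq> E \<inter> B" and EU: "E \<inter> B \<subseteq> U"
    and thick: "\<And>y w. y \<in> K \<Longrightarrow> norm w < d \<Longrightarrow> y + w \<in> U"
    and v: "norm v < d" and x: "x \<in> B" "x + v \<in> B" and change: "(x \<in> E) \<noteq> (x + v \<in> E)"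
  shows "x \<in> U - K \<or> x + v \<in> U - K"
proof (rule ccontr)
  assume gap: "\<not> (x \<in> U - K \<or> x + v \<in> U - K)"
  then consider "x \<in> K" | "x \<notin> U" by blast
  then show False
  proof cases
    case 1
    then have "x + v \<in> U" using thick v by blast
    then show False using 1 KE gap change x by auto
  next
    case 2
    then have "x + v \<in> K" using EU change gap x by auto
    then have "x + v + -v \<in> U" using thick v by (metis norm_minus_cancel)
    with 2 show False by simp
  qed
qed

lemma shift_defect_tendsto_0:
  fixes E :: "'a::euclidean_space set"
  assumes E: "E \<in> sets lebesgue"
  shows "((\<lambda>v. emeasure lebesgue (shift_defect R E v)) \<longlongrightarrow> 0) (at 0)"
proof (rule ennreal_tendsto_zeroI[of 4], simp)
  fix e :: real assume e: "e > 0"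
  define B where "B = ball (0::'a) (R + 1)"
  obtain K U where KU: "compact K" "open U" "K \<subseteq> E \<inter> B" "E \<inter> B \<subseteq> U"
      "emeasure lebesgue (U - K) < ennreal (2 * e)"
    by (rule lebesgue_compact_open_approx[of "E \<inter> B" e]) (use E e in \<open>auto simp: B_def borel_open\<close>)
  obtain d where d: "d > 0" "(\<Union>x\<in>K. ball x d) \<subseteq> U"
    using compact_subset_open_imp_ball_epsilon_subset[OF KU(1,2)] KU(3,4) by blast
  have thick: "y + w \<in> U" if "y \<in> K" "norm w < d" for y w
    using d that by (force simp: dist_norm)
  have UK: "U - K \<in> sets lebesgue"
    using KU by (intro sets.Diff) (simp_all add: borel_open borel_closed compact_imp_closed)
  show "eventually (\<lambda>v. emeasure lebesgue (shift_defect R E v) < ennreal (4 * e)) (at 0)"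
    unfolding eventually_at
  proof (intro exI[of _ "min d 1"] conjI ballI impI)
    fix v :: 'a assume "v \<noteq> 0 \<and> dist v 0 < min d 1"
    then have v: "norm v < d" "norm v < 1" by auto
    have "shift_defect R E v \<subseteq> (U - K) \<union> {x. x + v \<in> U - K}"
    proof
      fix x assume "x \<in> shift_defect R E v"
      then have x: "norm x < R" "(x \<in> E) \<noteq> (x + v \<in> E)" by (auto simp: shift_defect_def)
      have "norm (x + v) < R + 1" using norm_triangle_ineq[of x v] x v by linarith
      then show "x \<in> (U - K) \<union> {x. x + v \<in> U - K}"
        using shift_change_in_gap[OF KU(3,4) thick v(1) _ _ x(2)] x v by (auto simp: B_def)
    qed
    then have "emeasure lebesgue (shift_defect R E v) \<le> emeasure lebesgue ((U - K) \<union> {x. x + v \<in> U - K})"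
      by (rule emeasure_mono) (intro sets.Un UK sets_translate)
    also have "\<dots> \<le> emeasure lebesgue (U - K) + emeasure lebesgue {x. x + v \<in> U - K}"
      by (rule emeasure_subadditive[OF UK sets_translate[OF UK]])
    also have "\<dots> < ennreal (2 * e + 2 * e)"
      unfolding emeasure_translate by (rule add_mono_ennreal) (use KU in auto)
    finally show "emeasure lebesgue (shift_defect R E v) < ennreal (4 * e)" by simp
  qed (use d in simp)
qed

section \<open>Hausdorff distance of sets of radii\<close>

lemma nbhdI:
  assumes "u \<in> B" "\<bar>t - u\<bar> \<le> l"
  shows "t \<in> nbhd B l"
proof -
  have "(INF a\<in>B. ereal \<bar>t - a\<bar>) \<le> ereal \<bar>t - u\<bar>" by (rule INF_lower) fact
  also have "\<dots> \<le> ereal l" using assms by simp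
  finally show ?thesis unfolding nbhd_def by simp
qed

lemma hdist_le:
  assumes "l > 0" "A \<subseteq> nbhd B l" "B \<subseteq> nbhd A l"
  shows "hdist A B \<le> ereal l"
  unfolding hdist_def by (rule INF_lower) (use assms in auto)

lemma hdist_refl_le: "l > 0 \<Longrightarrow> hdist A A \<le> ereal l"
  by (rule hdist_le) (auto intro: nbhdI)

lemma hdist_le_grid:
  fixes A B :: "real set" and l T :: real and N :: nat
  assumes l: "l > 0" and A: "A \<subseteq> {0..<T}" and B: "B \<subseteq> {0..<T}" and N: "real N * l > T"
    and same_cells: "\<And>j. j < N \<Longrightarrow> (A \<inter> {real j * l .. (real j + 1) * l} \<noteq> {})
                                   = (B \<inter> {real j * l .. (real j + 1) * l} \<noteq> {})"
  shows "hdist A B \<le> ereal l"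
proof -
  have cover: "X \<subseteq> nbhd Y l" if X: "X \<subseteq> {0..<T}"
      and XY: "\<And>j. j < N \<Longrightarrow> X \<inter> {real j * l .. (real j + 1) * l} \<noteq> {}
                           \<Longrightarrow> Y \<inter> {real j * l .. (real j + 1) * l} \<noteq> {}"
    for X Y
  proof
    fix t assume t: "t \<in> X"
    define j where "j = nat \<lfloor>t / l\<rfloor>"
    have t0: "t \<ge> 0" "t < T" using t X by auto
    have "real j = of_int \<lfloor>t / l\<rfloor>" using t0 l by (simp add: j_def)
    then have "real j \<le> t / l" "t / l < real j + 1"
      using of_int_floor_le[of "t / l"] real_of_int_floor_add_one_gt[of "t / l"] by simp_all
    then have j: "real j * l \<le> t" "t < (real j + 1) * l"
      using l by (simp_all add: pos_le_divide_eq pos_divide_less_eq)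
    have "real j * l < real N * l" using j t0 N by linarith
    then have "j < N" using l by simp
    then obtain u where u: "u \<in> Y" "u \<in> {real j * l .. (real j + 1) * l}"
      using XY[of j] t j by fastforce
    show "t \<in> nbhd Y l" by (rule nbhdI[OF u(1)]) (use u(2) j in \<open>auto simp: algebra_simps\<close>)
  qed
  show ?thesis
  proof (rule hdist_le[OF l])
    show "A \<subseteq> nbhd B l" by (rule cover[OF A]) (use same_cells in blast)
    show "B \<subseteq> nbhd A l" by (rule cover[OF B]) (use same_cells in blast)
  qed
qed

section \<open>Convergence in measure for measurable set-valued maps\<close>

definition hits :: "('a \<Rightarrow> real set) \<Rightarrow> real \<Rightarrow> real \<Rightarrow> 'a set" where
  "hits F a b = {x. F x \<inter> {a..b} \<noteq> {}}"

lemma exists_unit_cell: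
  fixes t T :: real assumes "t \<ge> T"
  shows "\<exists>k::nat. t \<in> {T + real k .. T + real k + 1}"
proof -
  define k where "k = nat \<lfloor>t - T\<rfloor>"
  have "real k = of_int \<lfloor>t - T\<rfloor>" using assms by (simp add: k_def)
  then have "T + real k \<le> t \<and> t \<le> T + real k + 1"
    using of_int_floor_le[of "t - T"] real_of_int_floor_add_one_gt[of "t - T"] by linarith
  then show ?thesis by auto
qed

text \<open>Reaching beyond level T is a countable union of hitting events.\<close>
lemma sets_reaches_beyond:
  fixes F :: "'a::euclidean_space \<Rightarrow> real set"
  assumes hits: "\<And>a b. 0 \<le> a \<Longrightarrow> a \<le> b \<Longrightarrow> hits F a b \<in> sets lebesgue" and T: "T \<ge> 0"
  shows "{x. \<not> F x \<subseteq> {..<T}} \<in> sets lebesgue"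
proof -
  have "\<not> F x \<subseteq> {..<T} \<longleftrightarrow> (\<exists>k::nat. x \<in> hits F (T + real k) (T + real k + 1))" for x
  proof
    assume "\<not> F x \<subseteq> {..<T}"
    then obtain t where "t \<in> F x" "T \<le> t" by (metis lessThan_iff not_less subsetI)
    moreover obtain k :: nat where "t \<in> {T + real k .. T + real k + 1}"
      using exists_unit_cell[OF \<open>T \<le> t\<close>] by blast
    ultimately show "\<exists>k::nat. x \<in> hits F (T + real k) (T + real k + 1)"
      unfolding hits_def by blast
  qed (auto simp: hits_def)
  then have "{x. \<not> F x \<subseteq> {..<T}} = (\<Union>k\<in>UNIV. hits F (T + real k) (T + real k + 1))"
    by auto
  also have "\<dots> \<in> sets lebesgue"
    by (rule sets.countable_UN) (use T in \<open>auto intro!: hits\<close>)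
  finally show ?thesis .
qed

lemma tail_measure_small:
  fixes F :: "'a::euclidean_space \<Rightarrow> real set"
  assumes hits: "\<And>a b. 0 \<le> a \<Longrightarrow> a \<le> b \<Longrightarrow> hits F a b \<in> sets lebesgue"
    and Z: "Z \<in> sets lebesgue" and bdd: "\<And>x. x \<notin> Z \<Longrightarrow> \<exists>T. F x \<subseteq> {..T}" and e: "e > 0"
  obtains T where "T \<ge> 0" "emeasure lebesgue ((ball 0 \<rho> - Z) \<inter> {x. \<not> F x \<subseteq> {..<T}}) < ennreal e"
proof -
  define S where "S n = (ball 0 \<rho> - Z) \<inter> {x. \<not> F x \<subseteq> {..<real n}}" for n :: nat
  have S: "S n \<in> sets lebesgue" for n
    unfolding S_def by (intro sets.Int sets.Diff sets_reaches_beyond[OF hits]) (auto simp: Z borel_open)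
  have "decseq S"
    by (rule decseq_SucI) (force simp: S_def)
  moreover have "emeasure lebesgue (S n) \<noteq> \<infinity>" for n
  proof -
    have "emeasure lebesgue (S n) \<le> emeasure lebesgue (ball (0::'a) \<rho>)"
      by (rule emeasure_mono) (auto simp: S_def borel_open)
    also have "\<dots> < \<infinity>" using emeasure_lborel_ball_finite by (simp add: borel_open)
    finally show ?thesis by simp
  qed
  ultimately have "(\<lambda>n. emeasure lebesgue (S n)) \<longlonglongrightarrow> emeasure lebesgue (\<Inter>n. S n)"
    using S by (intro Lim_emeasure_decseq) auto
  moreover have "(\<Inter>n. S n) = {}"
  proof (rule ccontr)
    assume "(\<Inter>n. S n) \<noteq> {}"
    then obtain x where x: "\<And>n. x \<in> S n" by blast
    then have "x \<notin> Z" by (auto simp: S_def)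
    then obtain T where T: "F x \<subseteq> {..T}" using bdd by blast
    obtain n :: nat where "T < real n" using reals_Archimedean2 by blast
    with x[of n] T show False by (force simp: S_def)
  qed
  ultimately have "(\<lambda>n. emeasure lebesgue (S n)) \<longlonglongrightarrow> 0" by simp
  from order_tendstoD(2)[OF this, of "ennreal e"] e
  obtain n where "emeasure lebesgue (S n) < ennreal e" by (auto simp: eventually_sequentially)
  then show ?thesis using that[of "real n"] by (simp add: S_def)
qed

lemma hdist_le_same_events:
  fixes F :: "'a \<Rightarrow> real set"
  assumes Fpos: "\<And>x. F x \<subseteq> {0..}" and ZF: "\<And>x. x \<in> Z \<Longrightarrow> F x = {0..}"
    and l: "l > 0" and N: "real N * l > T"
    and same_Z: "(x \<in> Z) = (y \<in> Z)"
    and below: "x \<notin> Z \<Longrightarrow> F x \<subseteq> {..<T} \<and> F y \<subseteq> {..<T}"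
    and same_cells: "\<And>j. j < N \<Longrightarrow> (x \<in> hits F (real j * l) ((real j + 1) * l))
                                   = (y \<in> hits F (real j * l) ((real j + 1) * l))"
  shows "hdist (F x) (F y) \<le> ereal l"
proof (cases "x \<in> Z")
  case True
  then show ?thesis using same_Z ZF hdist_refl_le[OF l] by simp
next
  case False
  show ?thesis
  proof (rule hdist_le_grid[OF l _ _ N])
    show "F x \<subseteq> {0..<T}" "F y \<subseteq> {0..<T}" using Fpos below[OF False] by fastforce+
  qed (use same_cells in \<open>simp add: hits_def\<close>)
qed

lemma bad_set_subset:
  fixes F :: "'a::euclidean_space \<Rightarrow> real set" and R T :: real
  assumes Fpos: "\<And>x. F x \<subseteq> {0..}" and ZF: "\<And>x. x \<in> Z \<Longrightarrow> F x = {0..}"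
    and l: "l > 0" and N: "real N * l > T" and v: "norm v < 1"
  defines "S \<equiv> (ball 0 (R + 1) - Z) \<inter> {x. \<not> F x \<subseteq> {..<T}}"
  shows "{x \<in> ball 0 R. hdist (F x) (F (x + v)) > ereal l}
    \<subseteq> shift_defect R Z v \<union> S \<union> {x. x + v \<in> S}
       \<union> (\<Union>j<N. shift_defect R (hits F (real j * l) ((real j + 1) * l)) v)" (is "_ \<subseteq> ?W")
proof (rule subsetI, rule ccontr)
  fix x assume x: "x \<in> {x \<in> ball 0 R. hdist (F x) (F (x + v)) > ereal l}" and "x \<notin> ?W"
  have "norm (x + v) < R + 1" using norm_triangle_ineq[of x v] x v by simp
  then have "hdist (F x) (F (x + v)) \<le> ereal l"
    using \<open>x \<notin> ?W\<close> x
    by (intro hdist_le_same_events[OF Fpos ZF l N]) (auto simp: S_def shift_defect_def)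
  then show False using x by (simp add: not_le[symmetric])
qed

lemma hdist_shift_tendsto_0:
  fixes F :: "'a::euclidean_space \<Rightarrow> real set"
  assumes Fpos: "\<And>x. F x \<subseteq> {0..}"
    and hits: "\<And>a b. 0 \<le> a \<Longrightarrow> a \<le> b \<Longrightarrow> hits F a b \<in> sets lebesgue"
    and Z: "Z \<in> sets lebesgue" and ZF: "\<And>x. x \<in> Z \<Longrightarrow> F x = {0..}"
    and bdd: "\<And>x. x \<notin> Z \<Longrightarrow> \<exists>T. F x \<subseteq> {..T}" and l: "l > 0"
  shows "((\<lambda>v. louter {x \<in> ball 0 R. hdist (F x) (F (x + v)) > ereal l}) \<longlongrightarrow> 0) (at 0)"
proof (rule ennreal_tendsto_zeroI[of 4], simp)
  fix e :: real assume e: "e > 0"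
  obtain T where T: "T \<ge> 0"
    and tail: "emeasure lebesgue ((ball 0 (R + 1) - Z) \<inter> {x. \<not> F x \<subseteq> {..<T}}) < ennreal e"
    by (rule tail_measure_small[OF hits Z bdd e])
  define S where "S = (ball 0 (R + 1) - Z) \<inter> {x. \<not> F x \<subseteq> {..<T}}"
  have S: "S \<in> sets lebesgue"
    unfolding S_def by (intro sets.Int sets.Diff sets_reaches_beyond[OF hits T]) (auto simp: Z borel_open)
  define N where "N = nat \<lceil>T / l\<rceil> + 1"
  have N: "real N * l > T"
  proof -
    have "T / l < real N" unfolding N_def by linarith
    then show ?thesis using l by (simp add: pos_divide_less_eq)
  qed
  define C where "C j = hits F (real j * l) ((real j + 1) * l)" for j :: nat
  have C: "C j \<in> sets lebesgue" for j using l unfolding C_def by (intro hits) auto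
  define G where "G v = emeasure lebesgue (shift_defect R Z v)
                        + (\<Sum>j<N. emeasure lebesgue (shift_defect R (C j) v))" for v :: 'a
  have "(G \<longlongrightarrow> 0 + (\<Sum>j<N. 0)) (at 0)"
    unfolding G_def by (intro tendsto_add tendsto_sum shift_defect_tendsto_0 Z C)
  from order_tendstoD(2)[OF this[simplified], of "ennreal (2 * e)"]
  have "eventually (\<lambda>v. G v < ennreal (2 * e)) (at 0)" using e by simp
  moreover have "eventually (\<lambda>v. norm v < 1) (at (0::'a))"
    unfolding eventually_at by (intro exI[of _ 1]) auto
  ultimately show "eventually (\<lambda>v. louter {x \<in> ball 0 R. hdist (F x) (F (x + v)) > ereal l}
                                     < ennreal (4 * e)) (at 0)"
  proof eventually_elim
    case (elim v)
    define W where "W = shift_defect R Z v \<union> S \<union> {x. x + v \<in> S} \<union> (\<Union>j<N. shift_defect R (C j) v)"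
    have W: "W \<in> sets lebesgue"
      unfolding W_def using S Z C sets_shift_defect[OF C]
      by (intro sets.Un sets_shift_defect sets_translate sets.finite_UN) auto
    have "{x \<in> ball 0 R. hdist (F x) (F (x + v)) > ereal l} \<subseteq> W"
      unfolding W_def S_def C_def by (rule bad_set_subset[OF Fpos ZF l N elim(2)])
    then have "louter {x \<in> ball 0 R. hdist (F x) (F (x + v)) > ereal l} \<le> emeasure lebesgue W"
      unfolding louter_def by (intro INF_lower) (use W in auto)
    also have "\<dots> \<le> emeasure lebesgue (shift_defect R Z v \<union> S \<union> {x. x + v \<in> S})
                    + emeasure lebesgue (\<Union>j<N. shift_defect R (C j) v)"
      unfolding W_def using S Z C sets_shift_defect[OF C]
      by (intro emeasure_subadditive sets.Un sets_shift_defect sets_translate sets.finite_UN) auto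
    also have "\<dots> \<le> emeasure lebesgue (shift_defect R Z v) + emeasure lebesgue S
                    + emeasure lebesgue {x. x + v \<in> S} + (\<Sum>j<N. emeasure lebesgue (shift_defect R (C j) v))"
      using S Z C sets_shift_defect[OF C]
      by (intro add_mono emeasure_subadditive_finite order_trans[OF emeasure_subadditive]
            add_right_mono emeasure_subadditive sets.Un sets_shift_defect sets_translate) auto
    also have "\<dots> = G v + (emeasure lebesgue S + emeasure lebesgue S)"
      unfolding G_def emeasure_translate by (simp add: ac_simps)
    also have "\<dots> < ennreal (2 * e + (e + e))"
      using elim(1) tail by (intro add_mono_ennreal) (auto simp: S_def)
    finally show ?case by simp
  qed
qed

section \<open>The ball averages\<close>

lemma lborel_shift_reflect_eq:
  fixes t :: "'a::euclidean_space" and c :: real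
  assumes c: "c = 1 \<or> c = -1"
  shows "lborel = distr lborel borel (\<lambda>z. t + c *\<^sub>R z)"
proof -
  have "c \<noteq> 0" using c by auto
  from lborel_affine[OF this, of t]
  have "lborel = density (distr lborel borel (\<lambda>z. t + c *\<^sub>R z)) (\<lambda>_. 1)" using c by auto
  then show ?thesis by (simp add: density_1)
qed

lemma AE_shift_reflect_lborel:
  fixes t :: "'a::euclidean_space" and c :: real
  assumes c: "c = 1 \<or> c = -1" and P: "AE u in lborel. P u"
  shows "AE z in lborel. P (t + c *\<^sub>R z)"
proof -
  from P obtain N where N: "{x \<in> space lborel. \<not> P x} \<subseteq> N" "emeasure lborel N = 0" "N \<in> sets lborel"
    by (rule AE_E)
  have "AE u in distr lborel borel (\<lambda>z. t + c *\<^sub>R z). u \<notin> N"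
    by (subst lborel_shift_reflect_eq[OF c, of t, symmetric]) (use N in \<open>intro AE_not_in; auto\<close>)
  then have "AE z in lborel. t + c *\<^sub>R z \<notin> N"
    by (subst (asm) AE_distr_iff) (use N in auto)
  then show ?thesis by eventually_elim (use N in auto)
qed

lemma nn_integral_shift_reflect_lborel:
  fixes t :: "'a::euclidean_space" and c :: real and h :: "'a \<Rightarrow> ennreal"
  assumes c: "c = 1 \<or> c = -1" and h: "h \<in> borel_measurable borel"
  shows "(\<integral>\<^sup>+z. h (t + c *\<^sub>R z) \<partial>lborel) = (\<integral>\<^sup>+z. h z \<partial>lborel)"
proof -
  have "(\<integral>\<^sup>+z. h z \<partial>lborel) = (\<integral>\<^sup>+z. h z \<partial>distr lborel borel (\<lambda>z. t + c *\<^sub>R z))"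
    by (subst lborel_shift_reflect_eq[OF c, of t, symmetric]) (rule refl)
  also have "\<dots> = (\<integral>\<^sup>+z. h (t + c *\<^sub>R z) \<partial>lborel)"
    by (rule nn_integral_distr) (use h in auto)
  finally show ?thesis ..
qed

definition bint :: "(real^'n \<Rightarrow> real) \<Rightarrow> (real^'n \<Rightarrow> real) \<Rightarrow> real^'n \<Rightarrow> real \<Rightarrow> ennreal" where
  "bint f g x r = (\<integral>\<^sup>+z. ennreal \<bar>f (x + z) * g (x - z)\<bar> * indicator (ball 0 r) z \<partial>lborel)"

lemma bavg_bint:
  fixes f g :: "real^'n \<Rightarrow> real"
  shows "bavg f g x r = bint f g x r / emeasure lborel (ball (0::real^'n) r)"
  unfolding bavg_def bint_def nn_integral_completion
  using emeasure_completion[of "ball (0::real^'n) r" lborel] by (simp add: borel_open)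

lemma bavg_eq_ball_volume:
  fixes f g :: "real^'n \<Rightarrow> real"
  assumes "r \<ge> 0"
  shows "bavg f g x r = bint f g x r / ennreal (unit_ball_vol (real CARD('n)) * r ^ CARD('n))"
  using assms emeasure_ball[of r "0::real^'n"] unfolding bavg_bint by simp

lemma bint_mono: "r \<le> r' \<Longrightarrow> bint f g x r \<le> bint f g x r'"
  unfolding bint_def by (intro nn_integral_mono) (auto simp: indicator_def)

lemma bavg_cong_AE:
  assumes "AE u in lborel. f u = f' u" "AE u in lborel. g u = g' u"
  shows "bavg f g = bavg f' g'"
proof -
  have ae_f: "AE z in lborel. f (x + 1 *\<^sub>R z) = f' (x + 1 *\<^sub>R z)" for x
    by (rule AE_shift_reflect_lborel) (use assms in auto)
  have ae_g: "AE z in lborel. g (x + (-1) *\<^sub>R z) = g' (x + (-1) *\<^sub>R z)" for x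
    by (rule AE_shift_reflect_lborel) (use assms in auto)
  have ae: "AE z in lborel. f (x + z) = f' (x + z) \<and> g (x - z) = g' (x - z)" for x
    using ae_f[of x] ae_g[of x] by eventually_elim simp
  have "bint f g x r = bint f' g' x r" for x r
    unfolding bint_def by (rule nn_integral_cong_AE) (use ae[of x] in \<open>elim eventually_mono; simp\<close>)
  then show ?thesis by (intro ext) (simp add: bavg_bint)
qed

text \<open>For Borel f and g the average at a fixed radius is measurable in x (Tonelli).\<close>
lemma measurable_bavg:
  assumes [measurable]: "f \<in> borel_measurable borel" "g \<in> borel_measurable borel"
  shows "(\<lambda>x. bavg f g x r) \<in> borel_measurable lebesgue"
proof -
  have [measurable]: "ball (0::real^'n) r \<in> sets borel" by (simp add: borel_open)
  have "(\<lambda>x. bint f g x r) \<in> borel_measurable lborel"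
    unfolding bint_def by (rule lborel.borel_measurable_nn_integral) measurable
  then have "(\<lambda>x. bavg f g x r) \<in> borel_measurable lborel"
    unfolding bavg_bint by measurable
  then show ?thesis by (rule measurable_completion)
qed

text \<open>Lower semicontinuity from the right: a strict lower bound for the average at r
  persists for radii slightly larger than r (the integral increases with r, the
  volume is continuous).\<close>
lemma bavg_above_right:
  fixes f g :: "real^'n \<Rightarrow> real"
  assumes r: "r > 0" and c: "c < bavg f g x r"
  shows "eventually (\<lambda>r'. c < bavg f g x r') (at_right r)"
proof -
  define V where "V r = unit_ball_vol (real CARD('n)) * r ^ CARD('n)" for r :: real
  have V: "V r > 0" if "r > 0" for r using that by (simp add: V_def)
  have bv: "bavg f g x r = bint f g x r / ennreal (V r)" if "r > 0" for r
    using bavg_eq_ball_volume[of r f g x] that by (simp add: V_def)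
  have right: "eventually (\<lambda>r'. r < r') (at_right r)" by (rule eventually_at_right_less)
  show ?thesis
  proof (cases "bint f g x r")
    case top
    show ?thesis using right
    proof eventually_elim
      case (elim r')
      then have "bint f g x r' = top" using bint_mono[of r r' f g x] top by (simp add: top_unique)
      then have "bavg f g x r' = top" using bv[of r'] V[of r'] elim r by (simp add: ennreal_top_divide)
      then show ?case using less_le_trans[OF c top_greatest] by simp
    qed
  next
    case (real P)
    have "c < ennreal (P / V r)" using c bv[OF r] real V[OF r] by (simp add: divide_ennreal)
    then obtain c' where c': "c = ennreal c'" "0 \<le> c'" "c' < P / V r"
      by (cases c) (auto simp: ennreal_less_iff)
    have "V r \<noteq> 0" using V[OF r] by simp
    then have "((\<lambda>r'. P / V r') \<longlongrightarrow> P / V r) (at_right r)"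
      unfolding V_def by (intro tendsto_intros)
    from order_tendstoD(1)[OF this c'(3)] right
    show ?thesis
    proof eventually_elim
      case (elim r')
      have "c < ennreal (P / V r')" using c' elim by (simp add: ennreal_lessI)
      also have "\<dots> = ennreal P / ennreal (V r')" using real V[of r'] elim r by (simp add: divide_ennreal)
      also have "\<dots> \<le> bint f g x r' / ennreal (V r')"
        by (rule divide_right_mono_ennreal) (use bint_mono[of r r' f g x] real elim in auto)
      also have "\<dots> = bavg f g x r'" using bv[of r'] elim r by simp
      finally show ?case .
    qed
  qed
qed

lemma eventually_at_right_rat:
  fixes x :: real
  assumes "eventually P (at_right x)" "\<delta> > 0"
  shows "\<exists>q::rat. x < of_rat q \<and> of_rat q < x + \<delta> \<and> P (of_rat q)"
proof -
  from assms(1)[unfolded eventually_at_right[of x "x+1", OF less_add_one]]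
  obtain b where b: "b > x" "\<forall>y>x. y < b \<longrightarrow> P y" by blast
  obtain r where r: "r \<in> \<rat>" "x < r" "r < min b (x + \<delta>)"
    using Rats_dense_in_real[of x "min b (x + \<delta>)"] b assms(2) by auto
  from r(1) obtain q where "r = of_rat q" by (rule Rats_cases)
  then show ?thesis using r b by (intro exI[of _ q]) auto
qed

lemma bavg_le_bmax: "r > 0 \<Longrightarrow> bavg f g x r \<le> bmax f g x"
  unfolding bmax_def by (rule SUP_upper) auto

lemma bmax_SUP_rat: "bmax f g x = (SUP q\<in>{q::rat. 0 < q}. bavg f g x (real_of_rat q))"
proof (rule antisym)
  show "(SUP q\<in>{q::rat. 0 < q}. bavg f g x (real_of_rat q)) \<le> bmax f g x"
    by (rule SUP_least) (simp add: bavg_le_bmax)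
  show "bmax f g x \<le> (SUP q\<in>{q::rat. 0 < q}. bavg f g x (real_of_rat q))" (is "_ \<le> ?S")
    unfolding bmax_def
  proof (rule SUP_least, rule ccontr)
    fix r :: real assume "r \<in> {0<..}" and "\<not> bavg f g x r \<le> ?S"
    then have "r > 0" "?S < bavg f g x r" by auto
    from eventually_at_right_rat[OF bavg_above_right[OF this], of 1]
    obtain q :: rat where q: "r < real_of_rat q" "?S < bavg f g x (real_of_rat q)" by auto
    then have "0 < real_of_rat q" using \<open>r > 0\<close> by linarith
    then have "0 < q" by simp
    then have "bavg f g x (real_of_rat q) \<le> ?S" by (intro SUP_upper) auto
    with q(2) show False by simp
  qed
qed

lemma measurable_bmax:
  assumes "f \<in> borel_measurable borel" "g \<in> borel_measurable borel"
  shows "(\<lambda>x. bmax f g x) \<in> borel_measurable lebesgue"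
  unfolding bmax_SUP_rat by (rule borel_measurable_SUP) (auto intro: measurable_bavg[OF assms])

section \<open>Good radii\<close>

lemma good_radii_nonneg: "good_radii f g x \<subseteq> {0..}"
  unfolding good_radii_def by auto

lemma less_limsupD:
  fixes u :: "nat \<Rightarrow> 'a::{complete_linorder, linorder_topology}"
  assumes "c < limsup u"
  shows "frequently (\<lambda>k. c < u k) sequentially"
proof -
  have "\<not> limsup u \<le> c" using assms by simp
  then obtain y where y: "y > c" "\<not> eventually (\<lambda>k. y > u k) sequentially"
    unfolding Limsup_le_iff by auto
  then have "frequently (\<lambda>k. y \<le> u k) sequentially"
    unfolding frequently_def by (simp add: not_le)
  then show ?thesis by (rule frequently_elim1) (use y in auto)
qed

text \<open>Where M(f,g)(x) = 0 all averages vanish, so every radius is good.\<close>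
lemma good_radii_bmax_zero:
  assumes "bmax f g x = 0"
  shows "good_radii f g x = {0..}"
proof
  show "{0..} \<subseteq> good_radii f g x"
  proof
    fix r :: real assume "r \<in> {0..}"
    then have r: "r \<ge> 0" by simp
    define rk where "rk k = r + inverse (real (Suc k))" for k
    have "rk \<longlonglongrightarrow> r + 0" unfolding rk_def by (intro tendsto_intros LIMSEQ_inverse_real_of_nat)
    moreover have rk: "\<forall>k. rk k > 0" using r by (simp add: rk_def add_nonneg_pos)
    moreover have "limsup (\<lambda>k. bavg f g x (rk k)) \<le> bmax f g x"
      using rk by (intro Limsup_bounded always_eventually allI bavg_le_bmax) auto
    ultimately show "r \<in> good_radii f g x" unfolding good_radii_def using r assms by auto
  qed
qed (rule good_radii_nonneg)

text \<open>The averages come arbitrarily close to M(f,g)(x) at radii arbitrarily close to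
  [a,b].  This is how good radii in [a,b] are detected.\<close>
definition near_max :: "(real^'n \<Rightarrow> real) \<Rightarrow> (real^'n \<Rightarrow> real) \<Rightarrow> real^'n \<Rightarrow> real \<Rightarrow> real \<Rightarrow> bool" where
  "near_max f g x a b \<longleftrightarrow>
     (\<forall>c<bmax f g x. \<forall>\<delta>>0. \<exists>\<rho>>0. a - \<delta> < \<rho> \<and> \<rho> < b + \<delta> \<and> c < bavg f g x \<rho>)"

lemma near_max_if_hits:
  assumes "good_radii f g x \<inter> {a..b} \<noteq> {}"
  shows "near_max f g x a b"
  unfolding near_max_def
proof (intro allI impI)
  fix c :: ennreal and \<delta> :: real
  assume c: "c < bmax f g x" and \<delta>: "\<delta> > 0"
  obtain r rk where r: "r \<in> {a..b}" "\<forall>k. rk k > 0" "rk \<longlonglongrightarrow> r"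
      "bmax f g x = limsup (\<lambda>k. bavg f g x (rk k))"
    using assms unfolding good_radii_def by blast
  have "frequently (\<lambda>k. c < bavg f g x (rk k)) sequentially"
    by (rule less_limsupD) (use c r in simp)
  moreover have "eventually (\<lambda>k. dist (rk k) r < \<delta>) sequentially"
    using r(3) \<delta> by (rule tendstoD)
  ultimately have "frequently (\<lambda>k. c < bavg f g x (rk k) \<and> dist (rk k) r < \<delta>) sequentially"
    by (rule frequently_eventually_frequently)
  then obtain k where k: "c < bavg f g x (rk k)" "dist (rk k) r < \<delta>" using frequently_ex by blast
  show "\<exists>\<rho>>0. a - \<delta> < \<rho> \<and> \<rho> < b + \<delta> \<and> c < bavg f g x \<rho>"
    using k r by (intro exI[of _ "rk k"]) (auto simp: dist_real_def)
qed

lemma good_radius_of_approx: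
  assumes \<rho>: "\<And>k. \<rho> k > 0" "\<rho> \<longlonglongrightarrow> r" and r: "r \<ge> 0"
    and u: "u \<longlonglongrightarrow> bmax f g x" "\<And>k. u k \<le> bavg f g x (\<rho> k)"
  shows "r \<in> good_radii f g x"
proof -
  have "eventually (\<lambda>k. u k \<le> bavg f g x (\<rho> k)) sequentially"
    and "eventually (\<lambda>k. bavg f g x (\<rho> k) \<le> bmax f g x) sequentially"
    using u(2) bavg_le_bmax[OF \<rho>(1)] by (auto intro!: always_eventually)
  then have "(\<lambda>k. bavg f g x (\<rho> k)) \<longlonglongrightarrow> bmax f g x"
    by (rule tendsto_sandwich[OF _ _ u(1) tendsto_const])
  then have "limsup (\<lambda>k. bavg f g x (\<rho> k)) = bmax f g x"
    by (rule lim_imp_Limsup[OF trivial_limit_sequentially])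
  then show ?thesis unfolding good_radii_def using \<rho> r by (auto intro!: exI[of _ \<rho>])
qed

text \<open>Conversely, near-maximal radii close to [a,b] accumulate (by compactness) at a
  good radius in [a,b].\<close>
lemma hits_if_near_max:
  assumes ab: "0 \<le> a" "a \<le> b" and near: "near_max f g x a b"
  shows "good_radii f g x \<inter> {a..b} \<noteq> {}"
proof (cases "bmax f g x = 0")
  case True
  then show ?thesis using good_radii_bmax_zero[OF True] ab by auto
next
  case False
  then have "0 < bmax f g x" by (simp add: zero_less_iff_neq_zero)
  from approx_from_below_dense_linorder[OF this]
  obtain u where u: "\<And>n. u n < bmax f g x" "u \<longlonglongrightarrow> bmax f g x" by blast
  define \<epsilon> where "\<epsilon> n = inverse (real (Suc n))" for n
  have "\<forall>n. \<exists>\<rho>>0. a - \<epsilon> n < \<rho> \<and> \<rho> < b + \<epsilon> n \<and> u n < bavg f g x \<rho>"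
    using near u(1) unfolding near_max_def \<epsilon>_def by auto
  then obtain \<rho> where \<rho>: "\<And>n. \<rho> n > 0" "\<And>n. a - \<epsilon> n < \<rho> n" "\<And>n. \<rho> n < b + \<epsilon> n"
      "\<And>n. u n < bavg f g x (\<rho> n)"
    by metis
  have \<epsilon>1: "\<epsilon> n \<le> 1" for n by (simp add: \<epsilon>_def inverse_le_1_iff)
  have "\<forall>n. \<rho> n \<in> {a - 1 .. b + 1}"
  proof
    fix n show "\<rho> n \<in> {a - 1 .. b + 1}" using \<rho>(2,3)[of n] \<epsilon>1[of n] by auto
  qed
  from seq_compactE[OF compact_imp_seq_compact[OF compact_Icc] this]
  obtain r \<sigma> where \<sigma>: "strict_mono \<sigma>" "(\<rho> \<circ> \<sigma>) \<longlonglongrightarrow> r" by blast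
  have \<epsilon>\<sigma>: "(\<lambda>n. \<epsilon> (\<sigma> n)) \<longlonglongrightarrow> 0"
    using LIMSEQ_subseq_LIMSEQ[OF LIMSEQ_inverse_real_of_nat \<sigma>(1)] by (simp add: comp_def \<epsilon>_def)
  have "a - 0 \<le> r"
    by (rule LIMSEQ_le[OF tendsto_diff[OF tendsto_const \<epsilon>\<sigma>] \<sigma>(2)])
       (use \<rho>(2) in \<open>auto intro: less_imp_le\<close>)
  moreover have "r \<le> b + 0"
    by (rule LIMSEQ_le[OF \<sigma>(2) tendsto_add[OF tendsto_const \<epsilon>\<sigma>]])
       (use \<rho>(3) in \<open>auto intro: less_imp_le\<close>)
  moreover have "r \<in> good_radii f g x"
    by (rule good_radius_of_approx[OF _ \<sigma>(2) _ LIMSEQ_subseq_LIMSEQ[OF u(2) \<sigma>(1)]])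
       (use \<rho>(1,4) ab \<open>a - 0 \<le> r\<close> in \<open>auto intro: less_imp_le\<close>)
  ultimately show ?thesis by auto
qed

lemma hits_good_radii_iff:
  "0 \<le> a \<Longrightarrow> a \<le> b \<Longrightarrow> good_radii f g x \<inter> {a..b} \<noteq> {} \<longleftrightarrow> near_max f g x a b"
  using near_max_if_hits hits_if_near_max by blast

text \<open>The same condition with rational levels c, rational radii and tolerances 1/(k+1):
  a countable family of conditions on measurable functions of x.\<close>
definition near_max_rat :: "(real^'n \<Rightarrow> real) \<Rightarrow> (real^'n \<Rightarrow> real) \<Rightarrow> real^'n \<Rightarrow> real \<Rightarrow> real \<Rightarrow> bool" where
  "near_max_rat f g x a b \<longleftrightarrow>
     (\<forall>c::rat. \<forall>k::nat. (0 \<le> real_of_rat c \<and> ennreal (real_of_rat c) < bmax f g x) \<longrightarrow>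
       (\<exists>\<rho>::rat. 0 < real_of_rat \<rho> \<and> a - inverse (real (Suc k)) < real_of_rat \<rho> \<and>
          real_of_rat \<rho> < b + inverse (real (Suc k)) \<and> ennreal (real_of_rat c) < bavg f g x (real_of_rat \<rho>)))"

lemma near_max_iff_rat: "near_max f g x a b \<longleftrightarrow> near_max_rat f g x a b"
proof
  assume near: "near_max f g x a b"
  show "near_max_rat f g x a b" unfolding near_max_rat_def
  proof (intro allI impI)
    fix c :: rat and k :: nat
    assume c: "0 \<le> real_of_rat c \<and> ennreal (real_of_rat c) < bmax f g x"
    define \<delta> where "\<delta> = inverse (real (Suc k))"
    have "\<delta> > 0" by (simp add: \<delta>_def)
    with near c obtain \<rho> where \<rho>: "\<rho> > 0" "a - \<delta> < \<rho>" "\<rho> < b + \<delta>"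
        "ennreal (real_of_rat c) < bavg f g x \<rho>"
      unfolding near_max_def by blast
    from eventually_at_right_rat[OF bavg_above_right[OF \<rho>(1,4)], of "b + \<delta> - \<rho>"] \<rho>(3)
    obtain q :: rat where q: "\<rho> < real_of_rat q" "real_of_rat q < b + \<delta>"
        "ennreal (real_of_rat c) < bavg f g x (real_of_rat q)"
      by auto
    show "\<exists>\<rho>::rat. 0 < real_of_rat \<rho> \<and> a - inverse (real (Suc k)) < real_of_rat \<rho> \<and>
        real_of_rat \<rho> < b + inverse (real (Suc k)) \<and> ennreal (real_of_rat c) < bavg f g x (real_of_rat \<rho>)"
    proof (intro exI[of _ q] conjI)
      show "0 < real_of_rat q" using q \<rho> by linarith
    qed (use q \<rho> in \<open>auto simp: \<delta>_def\<close>)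
  qed
next
  assume near: "near_max_rat f g x a b"
  show "near_max f g x a b" unfolding near_max_def
  proof (intro allI impI)
    fix c :: ennreal and \<delta> :: real
    assume c: "c < bmax f g x" and \<delta>: "\<delta> > 0"
    from ennreal_rat_dense[OF c] obtain r :: rat
      where r: "c < ennreal (real_of_rat r)" "ennreal (real_of_rat r) < bmax f g x" by blast
    have "0 \<le> real_of_rat r"
    proof (rule ccontr)
      assume "\<not> 0 \<le> real_of_rat r"
      then have "ennreal (real_of_rat r) = 0" by (simp add: ennreal_eq_0_iff)
      with r(1) show False by simp
    qed
    moreover obtain k where k: "inverse (real (Suc k)) < \<delta>" using reals_Archimedean[OF \<delta>] by blast
    ultimately obtain \<rho> :: rat where \<rho>: "0 < real_of_rat \<rho>" "a - inverse (real (Suc k)) < real_of_rat \<rho>"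
        "real_of_rat \<rho> < b + inverse (real (Suc k))" "ennreal (real_of_rat r) < bavg f g x (real_of_rat \<rho>)"
      using near r unfolding near_max_rat_def by blast
    show "\<exists>\<rho>>0. a - \<delta> < \<rho> \<and> \<rho> < b + \<delta> \<and> c < bavg f g x \<rho>"
      using \<rho> k r(1) by (intro exI[of _ "real_of_rat \<rho>"]) auto
  qed
qed

lemma sets_hits_good_radii:
  assumes fg: "f \<in> borel_measurable borel" "g \<in> borel_measurable borel" and ab: "0 \<le> a" "a \<le> b"
  shows "hits (good_radii f g) a b \<in> sets lebesgue"
proof -
  note [measurable] = measurable_bmax[OF fg] measurable_bavg[OF fg]
  have "Measurable.pred lebesgue (\<lambda>x. near_max_rat f g x a b)"
    unfolding near_max_rat_def by measurable
  then show ?thesis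
    unfolding hits_def hits_good_radii_iff[OF ab] near_max_iff_rat by (simp add: pred_def)
qed

lemma sets_bmax_zero:
  assumes fg: "f \<in> borel_measurable borel" "g \<in> borel_measurable borel"
  shows "{x. bmax f g x = 0} \<in> sets lebesgue"
proof -
  note [measurable] = measurable_bmax[OF fg]
  have "Measurable.pred lebesgue (\<lambda>x. bmax f g x = 0)" by measurable
  then show ?thesis by (simp add: pred_def)
qed

section \<open>Good radii are bounded where the maximal function is positive\<close>

lemma powr_le_scaled_powr:
  fixes b t s q :: real
  assumes "0 < t" "t \<le> b" "s \<le> q"
  shows "b powr s \<le> t powr (s - q) * b powr q"
proof -
  have "b powr s = b powr (s - q) * b powr q" by (simp add: powr_add[symmetric])
  also have "\<dots> \<le> t powr (s - q) * b powr q"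
    using assms by (intro mult_right_mono powr_mono2') auto
  finally show ?thesis .
qed

lemma young_with_error:
  fixes a b t p q :: real
  assumes a: "a \<ge> 0" and b: "b \<ge> 0" and t: "t > 0" and p: "p > 1" and q: "q \<ge> p / (p - 1)"
  shows "a * b \<le> t + (1 + t) * a powr p + t powr (p / (p - 1) - q) * b powr q"
proof -
  define s where "s = p / (p - 1)"
  have sp: "(s - 1) * (p - 1) = 1" using p by (simp add: s_def field_simps)
  have nonneg: "0 \<le> (1 + t) * a powr p" "0 \<le> t powr (s - q) * b powr q" using t by simp_all
  have "a * b \<le> t + (1 + t) * a powr p + t powr (s - q) * b powr q"
  proof (cases "b < t")
    case True
    have "a \<le> 1 + a powr p"
    proof (cases "a \<le> 1")
      case False
      then have "a powr 1 \<le> a powr p" using p by (intro powr_mono) auto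
      then show ?thesis using False by simp
    qed (use powr_ge_zero[of a p] in linarith)
    then have "a * b \<le> (1 + a powr p) * t"
      using True a b by (intro mult_mono) auto
    then have "a * b \<le> t + t * a powr p" by (simp add: algebra_simps)
    moreover have "t * a powr p \<le> (1 + t) * a powr p" by (intro mult_right_mono) auto
    ultimately show ?thesis using nonneg by linarith
  next
    case False
    then have bt: "t \<le> b" "b > 0" using t by auto
    show ?thesis
    proof (cases "a \<le> b powr (s - 1)")
      case True
      have "a * b \<le> b powr (s - 1) * b" using True b by (intro mult_right_mono) auto
      also have "\<dots> = b powr (s - 1) * b powr 1" using bt by simp
      also have "\<dots> = b powr s" by (subst powr_add[symmetric]) simp
      also have "\<dots> \<le> t powr (s - q) * b powr q"
        by (rule powr_le_scaled_powr[OF t bt(1)]) (use q in \<open>simp add: s_def\<close>)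
      finally show ?thesis using nonneg t by linarith
    next
      case False
      then have a0: "a > 0" using powr_ge_zero[of b "s - 1"] by linarith
      have "b = (b powr (s - 1)) powr (p - 1)" using bt sp by (simp add: powr_powr)
      also have "\<dots> < a powr (p - 1)" using False p by (intro powr_less_mono2) auto
      finally have "a * b \<le> a powr 1 * a powr (p - 1)" using a0 by simp
      also have "\<dots> = a powr p" by (subst powr_add[symmetric]) simp
      also have "\<dots> \<le> (1 + t) * a powr p" using t by (simp add: mult_le_cancel_right1)
      finally show ?thesis using nonneg t by linarith
    qed
  qed
  then show ?thesis by (simp add: s_def)
qed

lemma bint_bound:
  fixes f g :: "real^'n \<Rightarrow> real"
  assumes [measurable]: "f \<in> borel_measurable borel" "g \<in> borel_measurable borel"
    and p: "p > 1" and q: "q \<ge> p / (p - 1)" and t: "t > 0" and r: "r \<ge> 0"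
  shows "bint f g x r \<le> ennreal (t * (unit_ball_vol (real CARD('n)) * r ^ CARD('n)))
     + ennreal (1 + t) * (\<integral>\<^sup>+z. ennreal (\<bar>f z\<bar> powr p) \<partial>lborel)
     + ennreal (t powr (p / (p - 1) - q)) * (\<integral>\<^sup>+z. ennreal (\<bar>g z\<bar> powr q) \<partial>lborel)"
proof -
  define C where "C = t powr (p / (p - 1) - q)"
  have [measurable]: "ball (0::real^'n) r \<in> sets borel" by (simp add: borel_open)
  have pointwise: "ennreal \<bar>f (x + z) * g (x - z)\<bar> * indicator (ball 0 r) z \<le>
      ennreal t * indicator (ball 0 r) z + ennreal (1 + t) * ennreal (\<bar>f (x + z)\<bar> powr p)
      + ennreal C * ennreal (\<bar>g (x - z)\<bar> powr q)" for z
  proof (cases "z \<in> ball 0 r")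
    case True
    have "\<bar>f (x + z) * g (x - z)\<bar> \<le> t + (1 + t) * \<bar>f (x + z)\<bar> powr p + C * \<bar>g (x - z)\<bar> powr q"
      unfolding C_def abs_mult by (rule young_with_error) (use p q t in auto)
    then have "ennreal \<bar>f (x + z) * g (x - z)\<bar>
        \<le> ennreal t + ennreal (1 + t) * ennreal (\<bar>f (x + z)\<bar> powr p) + ennreal C * ennreal (\<bar>g (x - z)\<bar> powr q)"
      using t by (simp add: C_def ennreal_leI ennreal_plus[symmetric] ennreal_mult[symmetric] del: ennreal_plus)
    then show ?thesis using True by simp
  qed simp
  have "bint f g x r \<le> (\<integral>\<^sup>+z. ennreal t * indicator (ball 0 r) z
      + ennreal (1 + t) * ennreal (\<bar>f (x + z)\<bar> powr p) + ennreal C * ennreal (\<bar>g (x - z)\<bar> powr q) \<partial>lborel)"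
    unfolding bint_def by (rule nn_integral_mono) (rule pointwise)
  also have "\<dots> = ennreal t * emeasure lborel (ball (0::real^'n) r)
      + ennreal (1 + t) * (\<integral>\<^sup>+z. ennreal (\<bar>f (x + 1 *\<^sub>R z)\<bar> powr p) \<partial>lborel)
      + ennreal C * (\<integral>\<^sup>+z. ennreal (\<bar>g (x + (-1) *\<^sub>R z)\<bar> powr q) \<partial>lborel)"
    by (simp add: nn_integral_add nn_integral_cmult)
  also have "(\<integral>\<^sup>+z. ennreal (\<bar>f (x + 1 *\<^sub>R z)\<bar> powr p) \<partial>lborel) = (\<integral>\<^sup>+z. ennreal (\<bar>f z\<bar> powr p) \<partial>lborel)"
    by (rule nn_integral_shift_reflect_lborel[where h="\<lambda>u. ennreal (\<bar>f u\<bar> powr p)"]) auto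
  also have "(\<integral>\<^sup>+z. ennreal (\<bar>g (x + (-1) *\<^sub>R z)\<bar> powr q) \<partial>lborel) = (\<integral>\<^sup>+z. ennreal (\<bar>g z\<bar> powr q) \<partial>lborel)"
    by (rule nn_integral_shift_reflect_lborel[where h="\<lambda>u. ennreal (\<bar>g u\<bar> powr q)"]) auto
  also have "ennreal t * emeasure lborel (ball (0::real^'n) r)
      = ennreal (t * (unit_ball_vol (real CARD('n)) * r ^ CARD('n)))"
    using r t emeasure_ball[of r "0::real^'n"] by (simp add: ennreal_mult)
  finally show ?thesis by (simp add: C_def)
qed

lemma bavg_small_at_large_radii:
  fixes f g :: "real^'n \<Rightarrow> real"
  assumes fg: "f \<in> borel_measurable borel" "g \<in> borel_measurable borel"
    and p: "p > 1" and q: "q \<ge> p / (p - 1)" and t: "t > 0"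
    and f: "(\<integral>\<^sup>+z. ennreal (\<bar>f z\<bar> powr p) \<partial>lborel) < \<infinity>"
    and g: "(\<integral>\<^sup>+z. ennreal (\<bar>g z\<bar> powr q) \<partial>lborel) < \<infinity>"
  obtains T where "\<And>\<rho> x. \<rho> \<ge> T \<Longrightarrow> bavg f g x \<rho> \<le> ennreal (2 * t)"
proof -
  define K where "K = ennreal (1 + t) * (\<integral>\<^sup>+z. ennreal (\<bar>f z\<bar> powr p) \<partial>lborel)
     + ennreal (t powr (p / (p - 1) - q)) * (\<integral>\<^sup>+z. ennreal (\<bar>g z\<bar> powr q) \<partial>lborel)"
  have "K < \<infinity>" using f g unfolding K_def by (simp add: ennreal_mult_less_top)
  then obtain k where k: "K = ennreal k" "k \<ge> 0" by (cases K) auto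
  define \<omega> where "\<omega> = unit_ball_vol (real CARD('n))"
  have \<omega>: "\<omega> > 0" by (simp add: \<omega>_def)
  define T where "T = max 1 (k / (t * \<omega>))"
  have "bavg f g x \<rho> \<le> ennreal (2 * t)" if \<rho>: "\<rho> \<ge> T" for \<rho> x
  proof -
    define V where "V = \<omega> * \<rho> ^ CARD('n)"
    have \<rho>1: "\<rho> \<ge> 1" using \<rho> by (simp add: T_def)
    then have "\<rho> ^ 1 \<le> \<rho> ^ CARD('n)" by (intro power_increasing) auto
    then have "k / (t * \<omega>) \<le> \<rho> ^ CARD('n)" using \<rho> by (simp add: T_def)
    then have kV: "k \<le> t * V" using t \<omega> by (simp add: V_def divide_le_eq algebra_simps)
    have V: "V > 0" using \<omega> \<rho>1 by (simp add: V_def)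
    have "bavg f g x \<rho> = bint f g x \<rho> / ennreal V"
      using \<rho>1 bavg_eq_ball_volume[of \<rho> f g x] by (simp add: V_def \<omega>_def)
    also have "\<dots> \<le> (ennreal (t * V) + K) / ennreal V"
      by (rule divide_right_mono_ennreal)
         (use bint_bound[OF fg p q t, of \<rho> x] \<rho>1 in \<open>simp add: K_def V_def \<omega>_def add.assoc\<close>)
    also have "\<dots> = ennreal ((t * V + k) / V)"
      using k t V by (simp add: divide_ennreal ennreal_plus[symmetric] del: ennreal_plus)
    also have "\<dots> \<le> ennreal (2 * t)"
      using kV V by (intro ennreal_leI) (simp add: divide_le_eq mult.commute)
    finally show ?thesis .
  qed
  then show ?thesis by (rule that)
qed

text \<open>If moreover M(f,g)(x) > 0, the averages over large balls stay below a level
  2 t < M(f,g)(x), so no radius beyond that point can be good.\<close>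
lemma good_radii_bounded:
  fixes f g :: "real^'n \<Rightarrow> real"
  assumes fg: "f \<in> borel_measurable borel" "g \<in> borel_measurable borel"
    and p: "p > 1" and q: "q \<ge> p / (p - 1)"
    and f: "(\<integral>\<^sup>+z. ennreal (\<bar>f z\<bar> powr p) \<partial>lborel) < \<infinity>"
    and g: "(\<integral>\<^sup>+z. ennreal (\<bar>g z\<bar> powr q) \<partial>lborel) < \<infinity>"
    and M: "bmax f g x \<noteq> 0"
  shows "\<exists>T. good_radii f g x \<subseteq> {..T}"
proof -
  have "0 < bmax f g x" using M by (simp add: zero_less_iff_neq_zero)
  from ennreal_rat_dense[OF this] obtain c :: rat
    where c: "0 < ennreal (real_of_rat c)" "ennreal (real_of_rat c) < bmax f g x" by blast
  define t where "t = real_of_rat c / 2"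
  have t: "t > 0" "ennreal (2 * t) < bmax f g x" using c by (simp_all add: t_def)
  obtain T where small: "\<And>\<rho> x. \<rho> \<ge> T \<Longrightarrow> bavg f g x \<rho> \<le> ennreal (2 * t)"
    using bavg_small_at_large_radii[OF fg p q t(1) f g] by blast
  have "\<rho> \<le> T" if good: "\<rho> \<in> good_radii f g x" for \<rho>
  proof (rule ccontr)
    assume "\<not> \<rho> \<le> T"
    obtain rk where rk: "\<forall>k. rk k > 0" "rk \<longlonglongrightarrow> \<rho>" "bmax f g x = limsup (\<lambda>k. bavg f g x (rk k))"
      using good unfolding good_radii_def by blast
    have "T < \<rho>" using \<open>\<not> \<rho> \<le> T\<close> by simp
    from order_tendstoD(1)[OF rk(2) this]
    have "eventually (\<lambda>k. bavg f g x (rk k) \<le> ennreal (2 * t)) sequentially"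
      by eventually_elim (rule small, simp)
    then have "limsup (\<lambda>k. bavg f g x (rk k)) \<le> ennreal (2 * t)" by (rule Limsup_bounded)
    with t(2) rk(3) show False by simp
  qed
  then show ?thesis by auto
qed

lemma in_Lp_borel_representative:
  fixes f :: "'a::euclidean_space \<Rightarrow> real"
  assumes "in_Lp p f"
  obtains f' where "f' \<in> borel_measurable borel" "AE x in lborel. f x = f' x"
    "(\<integral>\<^sup>+z. ennreal (\<bar>f' z\<bar> powr p) \<partial>lborel) < \<infinity>"
proof -
  from assms have fm: "f \<in> borel_measurable lebesgue" and fi: "integrable lebesgue (\<lambda>x. \<bar>f x\<bar> powr p)"
    unfolding in_Lp_def by auto
  from completion_ex_borel_measurable_real[OF fm] obtain f' where
    f': "f' \<in> borel_measurable lborel" "AE x in lborel. f x = f' x" by blast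
  have "(\<integral>\<^sup>+x. ennreal (\<bar>f x\<bar> powr p) \<partial>lborel) < \<infinity>"
    using fi by (simp add: integrable_iff_bounded nn_integral_completion)
  also have "(\<integral>\<^sup>+x. ennreal (\<bar>f x\<bar> powr p) \<partial>lborel) = (\<integral>\<^sup>+x. ennreal (\<bar>f' x\<bar> powr p) \<partial>lborel)"
    by (rule nn_integral_cong_AE) (use f'(2) in \<open>auto elim!: eventually_mono\<close>)
  finally show ?thesis using f' that by simp
qed

lemma conjugate_exponent_le:
  fixes p q :: real
  assumes "1 < p" "1 < q" "1/p + 1/q \<le> 1"
  shows "p / (p - 1) \<le> q"
proof -
  have "(1/p + 1/q) * (p * q) \<le> 1 * (p * q)" by (rule mult_right_mono) (use assms in simp_all)
  moreover have "(1/p + 1/q) * (p * q) = q + p" using assms(1,2) by (simp add: field_simps)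
  ultimately have "p \<le> q * (p - 1)" by (simp add: algebra_simps)
  then show ?thesis using assms(1) by (simp add: pos_divide_le_eq)
qed

lemma tendsto_along_line:
  fixes u :: "'a::real_normed_vector"
  assumes "(F \<longlongrightarrow> L) (at 0)" "u \<noteq> 0"
  shows "((\<lambda>h::real. F (h *\<^sub>R u)) \<longlongrightarrow> L) (at 0)"
proof (rule tendsto_compose_eventually[OF assms(1)])
  show "((\<lambda>h::real. h *\<^sub>R u) \<longlongrightarrow> 0) (at 0)"
    by (rule tendsto_eq_intros) (auto intro: tendsto_ident_at)
  show "eventually (\<lambda>h::real. h *\<^sub>R u \<noteq> 0) (at 0)"
    unfolding eventually_at by (intro exI[of _ 1]) (use assms(2) in auto)
qed

theorem lemma3:
  fixes f g :: "real^'n \<Rightarrow> real" and p q :: real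
  assumes "1 < p" and "1 < q"
    and "in_Lp p f" and "in_Lp q g"
    and "1/p + 1/q < 1 \<or> (CARD('n) = 1 \<and> 1/p + 1/q \<le> 1)"
  shows "\<forall>i::'n. \<forall>R>0. \<forall>l>0.
     ((\<lambda>h::real. louter {x \<in> ball 0 R.
         hdist (good_radii f g x) (good_radii f g (x + h *\<^sub>R axis i 1)) > ereal l}) \<longlongrightarrow> 0) (at 0)"
proof (intro allI impI)
  fix i :: 'n and R l :: real assume "R > 0" "l > 0"
  obtain f' where f': "f' \<in> borel_measurable borel" "AE x in lborel. f x = f' x"
    "(\<integral>\<^sup>+z. ennreal (\<bar>f' z\<bar> powr p) \<partial>lborel) < \<infinity>" by (rule in_Lp_borel_representative[OF assms(3)])
  obtain g' where g': "g' \<in> borel_measurable borel" "AE x in lborel. g x = g' x"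
    "(\<integral>\<^sup>+z. ennreal (\<bar>g' z\<bar> powr q) \<partial>lborel) < \<infinity>" by (rule in_Lp_borel_representative[OF assms(4)])
  have "bavg f g = bavg f' g'" by (rule bavg_cong_AE[OF f'(2) g'(2)])
  then have good_radii_eq: "good_radii f g = good_radii f' g'"
    by (simp add: good_radii_def[abs_def] bmax_def[abs_def])
  have q: "p / (p - 1) \<le> q" using assms(1,2,5) by (intro conjugate_exponent_le) auto
  have "((\<lambda>v. louter {x \<in> ball 0 R. hdist (good_radii f' g' x) (good_radii f' g' (x + v)) > ereal l})
         \<longlongrightarrow> 0) (at 0)"
  proof (rule hdist_shift_tendsto_0[where Z = "{x. bmax f' g' x = 0}"])
    show "\<exists>T. good_radii f' g' x \<subseteq> {..T}" if "x \<notin> {x. bmax f' g' x = 0}" for x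
      using that by (intro good_radii_bounded[OF f'(1) g'(1) assms(1) q f'(3) g'(3)]) simp
    show "good_radii f' g' x = {0..}" if "x \<in> {x. bmax f' g' x = 0}" for x
      using that by (simp add: good_radii_bmax_zero)
  qed (use good_radii_nonneg sets_hits_good_radii[OF f'(1) g'(1)] sets_bmax_zero[OF f'(1) g'(1)]
           \<open>l > 0\<close> in auto)
  then show "((\<lambda>h::real. louter {x \<in> ball 0 R.
      hdist (good_radii f g x) (good_radii f g (x + h *\<^sub>R axis i 1)) > ereal l}) \<longlongrightarrow> 0) (at 0)"
    unfolding good_radii_eq by (rule tendsto_along_line) (simp add: axis_eq_0_iff)
qed


end
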